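(* Let $X,Y$ be metric spaces and equip $X\times Y$ with the $\ell^1$-metric. For any two Borel probability measures $\pi,\pi'$ on $X\times Y$, \[ |\operatorname{dis}\pi-\operatorname{dis}\pi'|\le 2\,d_{\mathrm P}(\pi,\pi'). \]
   Context: For nonempty $S\subset X\times Y$, $\operatorname{dis}S:=\sup\{|d_X(x,x')-d_Y(y,y')|:(x,y),(x',y')\in S\}$, $\operatorname{dis}\emptyset:=\infty$; for a Borel probability measure $\pi$ on $X\times Y$, $\operatorname{dis}\pi:=\inf_S\max\{\operatorname{dis}S,1-\pi(S)\}$ over closed $S\subset X\times Y$. $d_{\mathrm P}$ is the Prohorov metric on the $\ell^1$-product: $d_{\mathrm P}(\mu,\nu):=\inf\{\varepsilon>0:\mu(U_\varepsilon(A))\ge\nu(A)-\varepsilon\ \forall\text{ Borel }A\}$, $U_\varepsilon(A)$ the open $\varepsilon$-neighborhood. *)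

theory Defs
  imports "HOL-Probability.Probability"
begin

definition dist1 :: "('a::metric_space \<times> 'b::metric_space) \<Rightarrow> ('a \<times> 'b) \<Rightarrow> real" where
  "dist1 p q = dist (fst p) (fst q) + dist (snd p) (snd q)"

definition nbhd1 :: "real \<Rightarrow> ('a::metric_space \<times> 'b::metric_space) set \<Rightarrow> ('a \<times> 'b) set" where
  "nbhd1 e A = {p. \<exists>q\<in>A. dist1 p q < e}"

definition dis_set :: "('a::metric_space \<times> 'b::metric_space) set \<Rightarrow> ereal" where
  "dis_set S = (if S = {} then \<infinity> else
     (SUP p\<in>S. SUP q\<in>S. ereal \<bar>dist (fst p) (fst q) - dist (snd p) (snd q)\<bar>))"

definition dis_meas :: "('a::metric_space \<times> 'b::metric_space) measure \<Rightarrow> ereal" where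
  "dis_meas M = (INF S\<in>{S. closed S}. max (dis_set S) (ereal (1 - measure M S)))"

definition prohorov :: "('a::metric_space \<times> 'b::metric_space) measure \<Rightarrow> ('a \<times> 'b) measure \<Rightarrow> real" where
  "prohorov M N = Inf {e. e > 0 \<and> (\<forall>A\<in>sets borel. measure M (nbhd1 e A) \<ge> measure N A - e)}"

end

theory Submission
  imports Defs
begin

text \<open>If \<pi> is \<epsilon>-close to \<pi>' in the Prohorov sense and S is closed, then the closed
  \<epsilon>-neighbourhood of S has \<pi>-measure at least \<pi>'(S) - \<epsilon> and, by the triangle inequality in
  both factors, distortion at most dis S + 2\<epsilon>. Hence dis \<pi> \<le> dis \<pi>' + 2\<epsilon>; the Prohorov
  condition is symmetric (pass to complements), so the same bound holds with \<pi>, \<pi>' swapped,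
  and letting \<epsilon> decrease to the Prohorov distance gives the claim.\<close>

definition distortion_le :: "real \<Rightarrow> ('a::metric_space \<times> 'b::metric_space) set \<Rightarrow> bool" where
  "distortion_le c S \<longleftrightarrow> (\<forall>p\<in>S. \<forall>q\<in>S. \<bar>dist (fst p) (fst q) - dist (snd p) (snd q)\<bar> \<le> c)"

definition prohorov_close ::
    "('a::metric_space \<times> 'b::metric_space) measure \<Rightarrow> ('a \<times> 'b) measure \<Rightarrow> real \<Rightarrow> bool" where
  "prohorov_close M N e \<longleftrightarrow> (\<forall>A\<in>sets borel. measure N A - e \<le> measure M (nbhd1 e A))"

lemma dist1_commute: "dist1 p q = dist1 q p"
  unfolding dist1_def by (simp add: dist_commute)

lemma open_nbhd1: "open (nbhd1 e (A::('a::metric_space \<times> 'b::metric_space) set))"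
proof -
  have "nbhd1 e A = (\<Union>q\<in>A. {p. dist1 p q < e})" unfolding nbhd1_def by auto
  moreover have "open {p. dist1 p q < e}" for q :: "'a \<times> 'b"
    unfolding dist1_def by (intro open_Collect_less continuous_intros)
  ultimately show ?thesis by auto
qed

lemma nbhd1_mono: "e \<le> e' \<Longrightarrow> nbhd1 e A \<subseteq> nbhd1 e' A"
  unfolding nbhd1_def by force

lemma subset_nbhd1: "0 < e \<Longrightarrow> A \<subseteq> nbhd1 e A"
  unfolding nbhd1_def dist1_def by force

lemma dis_set_le_iff: "S \<noteq> {} \<Longrightarrow> dis_set S \<le> ereal c \<longleftrightarrow> distortion_le c S"
  unfolding dis_set_def distortion_le_def by (simp add: SUP_le_iff)

lemma dis_set_nonneg: "0 \<le> dis_set S"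
proof (cases "S = {}")
  case False
  then obtain p where "p \<in> S" by auto
  then show ?thesis
    unfolding dis_set_def zero_ereal_def by (auto intro!: SUP_upper2[of p])
qed (simp add: dis_set_def)

lemma distortion_le_closure:
  fixes S :: "('a::metric_space \<times> 'b::metric_space) set"
  assumes "distortion_le c S"
  shows "distortion_le c (closure S)"
proof -
  let ?C = "{z::('a \<times> 'b) \<times> ('a \<times> 'b).
    \<bar>dist (fst (fst z)) (fst (snd z)) - dist (snd (fst z)) (snd (snd z))\<bar> \<le> c}"
  have "closed ?C" by (intro closed_Collect_le continuous_intros)
  have "\<forall>p\<in>S. \<forall>q\<in>S. (p, q) \<in> ?C" using assms unfolding distortion_le_def by simp
  then have "S \<times> S \<subseteq> ?C" by blast
  then have "closure (S \<times> S) \<subseteq> ?C" using \<open>closed ?C\<close> by (rule closure_minimal)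
  then have "closure S \<times> closure S \<subseteq> ?C" by (simp add: closure_Times)
  then show ?thesis unfolding distortion_le_def by fastforce
qed

lemma distortion_le_nbhd1:
  fixes S :: "('a::metric_space \<times> 'b::metric_space) set"
  assumes "distortion_le d S"
  shows "distortion_le (d + 2 * e) (nbhd1 e S)"
  unfolding distortion_le_def
proof (intro ballI)
  fix p q assume "p \<in> nbhd1 e S" "q \<in> nbhd1 e S"
  then obtain p0 q0 where p0: "p0 \<in> S" "dist1 p p0 < e" and q0: "q0 \<in> S" "dist1 q q0 < e"
    unfolding nbhd1_def by auto
  have tri: "dist x y \<le> dist x x0 + dist x0 y0 + dist y0 y" for x y x0 y0 :: "'c::metric_space"
    by (meson dist_triangle order.trans add_right_mono)
  have "\<bar>dist (fst p0) (fst q0) - dist (snd p0) (snd q0)\<bar> \<le> d"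
    using assms p0 q0 unfolding distortion_le_def by auto
  then show "\<bar>dist (fst p) (fst q) - dist (snd p) (snd q)\<bar> \<le> d + 2 * e"
    using p0(2) q0(2)
      tri[of "fst p" "fst q" "fst p0" "fst q0"] tri[of "fst p0" "fst q0" "fst p" "fst q"]
      tri[of "snd p" "snd q" "snd p0" "snd q0"] tri[of "snd p0" "snd q0" "snd p" "snd q"]
    unfolding dist1_def by (simp add: dist_commute abs_le_iff)
qed

lemma prohorov_close_mono:
  assumes "sets M = sets borel" "finite_measure M" "prohorov_close M N e" "e \<le> e'"
  shows "prohorov_close M N e'"
  unfolding prohorov_close_def
proof
  fix A :: "('a::metric_space \<times> 'b::metric_space) set" assume "A \<in> sets borel"
  have "measure M (nbhd1 e A) \<le> measure M (nbhd1 e' A)"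
    using assms(1,4) borel_open[OF open_nbhd1]
    by (intro finite_measure.finite_measure_mono[OF assms(2)] nbhd1_mono) auto
  then show "measure N A - e' \<le> measure M (nbhd1 e' A)"
    using assms(3,4) \<open>A \<in> sets borel\<close> unfolding prohorov_close_def by fastforce
qed

text \<open>Apply the hypothesis to the complement B of the \<epsilon>-neighbourhood of A:
  the \<epsilon>-neighbourhood of B misses A.\<close>
lemma prohorov_close_swap:
  fixes M N :: "('a::metric_space \<times> 'b::metric_space) measure"
  assumes "prob_space M" "sets M = sets borel" "prob_space N" "sets N = sets borel"
    and "prohorov_close M N e"
  shows "prohorov_close N M e"
  unfolding prohorov_close_def
proof
  fix A :: "('a \<times> 'b) set" assume A: "A \<in> sets borel"
  interpret M: prob_space M by fact
  interpret N: prob_space N by fact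
  have space: "space M = UNIV" "space N = UNIV"
    using assms(2,4) by (metis sets_eq_imp_space_eq space_borel)+
  define B where "B = - nbhd1 e A"
  have nbhd_A: "nbhd1 e A \<in> sets borel" using borel_open[OF open_nbhd1] .
  then have "B \<in> sets borel" unfolding B_def by (simp add: borel_comp)
  have "nbhd1 e B \<subseteq> - A"
  proof
    fix x assume "x \<in> nbhd1 e B"
    then obtain y where y: "y \<notin> nbhd1 e A" "dist1 x y < e"
      unfolding B_def nbhd1_def by auto
    show "x \<in> - A"
    proof
      assume "x \<in> A"
      then have "y \<in> nbhd1 e A"
        using y(2) dist1_commute[of y x] unfolding nbhd1_def by (intro CollectI bexI[of _ x]) auto
      then show False using y(1) by contradiction
    qed
  qed
  then have "measure M (nbhd1 e B) \<le> measure M (- A)"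
    using A assms(2) by (intro M.finite_measure_mono) (auto simp: borel_comp)
  also have "\<dots> = 1 - measure M A"
    using M.prob_compl[of A] A assms(2) space by (simp add: Compl_eq_Diff_UNIV)
  finally have "measure M (nbhd1 e B) \<le> 1 - measure M A" .
  moreover have "measure N B = 1 - measure N (nbhd1 e A)"
    using N.prob_compl[of "nbhd1 e A"] nbhd_A assms(4) space unfolding B_def
    by (simp add: Compl_eq_Diff_UNIV)
  moreover have "measure N B - e \<le> measure M (nbhd1 e B)"
    using assms(5) \<open>B \<in> sets borel\<close> unfolding prohorov_close_def by blast
  ultimately show "measure M A - e \<le> measure N (nbhd1 e A)" by linarith
qed

lemma dis_meas_le_closed_set:
  fixes M N :: "('a::metric_space \<times> 'b::metric_space) measure"
  assumes "prob_space M" "sets M = sets borel" "prohorov_close M N e" "0 < e" "closed S"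
  shows "dis_meas M \<le> max (dis_set S) (ereal (1 - measure N S)) + ereal (2 * e)"
proof (cases "S = {} \<or> dis_set S = \<infinity>")
  case True
  then have "dis_set S = \<infinity>" by (cases "S = {}") (auto simp: dis_set_def)
  then show ?thesis by simp
next
  case False
  interpret M: prob_space M by fact
  from False have "S \<noteq> {}" by auto
  obtain d where d: "dis_set S = ereal d"
    using False dis_set_nonneg[of S] by (cases "dis_set S") auto
  define S' where "S' = closure (nbhd1 e S)"
  have "S' \<noteq> {}" unfolding S'_def using \<open>S \<noteq> {}\<close> subset_nbhd1[OF \<open>0 < e\<close>] by auto
  have "distortion_le d S" using dis_set_le_iff[OF \<open>S \<noteq> {}\<close>, of d] d by simp
  then have "distortion_le (d + 2 * e) S'"
    unfolding S'_def by (intro distortion_le_closure distortion_le_nbhd1)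
  then have dis_S': "dis_set S' \<le> ereal (d + 2 * e)" using dis_set_le_iff[OF \<open>S' \<noteq> {}\<close>] by simp
  have "measure N S - e \<le> measure M S'"
  proof -
    have "measure N S - e \<le> measure M (nbhd1 e S)"
      using assms(3,5) unfolding prohorov_close_def by auto
    also have "\<dots> \<le> measure M S'"
      unfolding S'_def using assms(2) by (intro M.finite_measure_mono closure_subset) auto
    finally show ?thesis .
  qed
  then have mass_S': "ereal (1 - measure M S') \<le> ereal (1 - measure N S + e)" by simp
  have "dis_meas M \<le> max (dis_set S') (ereal (1 - measure M S'))"
    unfolding dis_meas_def S'_def by (intro INF_lower) auto
  also have "\<dots> \<le> max (ereal (d + 2 * e)) (ereal (1 - measure N S + e))"
    using dis_S' mass_S' by (rule max.mono)
  also have "\<dots> \<le> max (dis_set S) (ereal (1 - measure N S)) + ereal (2 * e)"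
    using \<open>0 < e\<close> by (simp add: d ereal_max[symmetric] del: ereal_max)
  finally show ?thesis .
qed

lemma dis_meas_le_add:
  fixes M N :: "('a::metric_space \<times> 'b::metric_space) measure"
  assumes "prob_space M" "sets M = sets borel" "prohorov_close M N e" "0 < e"
  shows "dis_meas M \<le> dis_meas N + ereal (2 * e)"
proof -
  have "dis_meas M - ereal (2 * e) \<le> dis_meas N"
    unfolding dis_meas_def[of N]
    using dis_meas_le_closed_set[OF assms] by (intro INF_greatest) (simp add: ereal_minus_le)
  then show ?thesis by (simp add: ereal_minus_le)
qed

lemma dis_meas_bounds:
  fixes M :: "('a::metric_space \<times> 'b::metric_space) measure"
  assumes "prob_space M"
  shows "0 \<le> dis_meas M" "dis_meas M \<le> 1"
proof -
  interpret M: prob_space M by fact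
  show "0 \<le> dis_meas M"
    unfolding dis_meas_def
  proof (rule INF_greatest)
    fix S :: "('a \<times> 'b) set"
    have "ereal 0 \<le> ereal (1 - measure M S)" using M.prob_le_1[of S] by simp
    then show "0 \<le> max (dis_set S) (ereal (1 - measure M S))"
      by (simp add: max.coboundedI2 zero_ereal_def)
  qed
  fix p :: "'a \<times> 'b"
  have "dis_set {p} = 0" by (simp add: dis_set_def zero_ereal_def)
  then have "max (dis_set {p}) (ereal (1 - measure M {p})) \<le> 1"
    using measure_nonneg[of M "{p}"] by (simp add: one_ereal_def zero_ereal_def)
  then show "dis_meas M \<le> 1"
    unfolding dis_meas_def by (intro INF_lower2[of "{p}"]) auto
qed

lemma prohorov_close_above_prohorov:
  fixes M N :: "('a::metric_space \<times> 'b::metric_space) measure"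
  assumes "prob_space M" "sets M = sets borel" "prob_space N"
    and "prohorov M N < e"
  shows "0 < e" "prohorov_close M N e"
proof -
  define E where "E = {e. 0 < e \<and> prohorov_close M N e}"
  have "prohorov M N = Inf E"
    unfolding prohorov_def E_def prohorov_close_def by (simp add: le_diff_eq add.commute)
  have "1 \<in> E"
    unfolding E_def prohorov_close_def
    using prob_space.prob_le_1[OF assms(3)] by (auto intro: order.trans[OF _ measure_nonneg])
  moreover have "bdd_below E" unfolding E_def bdd_below_def by (rule exI[of _ 0]) auto
  ultimately obtain e0 where "e0 \<in> E" "e0 < e"
    using assms(4) \<open>prohorov M N = Inf E\<close> cInf_less_iff by (metis empty_iff)
  then show "0 < e" "prohorov_close M N e"
    unfolding E_def
    using prohorov_close_mono[OF assms(2) prob_space.finite_measure[OF assms(1)]] by auto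
qed

theorem lemma4p6:
  fixes M N :: "('a::metric_space \<times> 'b::metric_space) measure"
  assumes "prob_space M" and "sets M = sets borel"
    and "prob_space N" and "sets N = sets borel"
  shows "\<bar>dis_meas M - dis_meas N\<bar> \<le> 2 * ereal (prohorov M N)"
proof -
  obtain a where a: "dis_meas M = ereal a"
    using dis_meas_bounds[OF assms(1)] by (cases "dis_meas M") auto
  obtain b where b: "dis_meas N = ereal b"
    using dis_meas_bounds[OF assms(3)] by (cases "dis_meas N") auto
  have "\<bar>a - b\<bar> / 2 \<le> e" if "prohorov M N < e" for e
  proof -
    note close = prohorov_close_above_prohorov[OF assms(1,2,3) that]
    have "dis_meas M \<le> dis_meas N + ereal (2 * e)"
      using dis_meas_le_add[OF assms(1,2) close(2,1)] .
    moreover have "dis_meas N \<le> dis_meas M + ereal (2 * e)"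
      using dis_meas_le_add[OF assms(3,4) prohorov_close_swap[OF assms close(2)] close(1)] .
    ultimately show ?thesis using a b by auto
  qed
  then have "\<bar>a - b\<bar> / 2 \<le> prohorov M N" by (rule dense_ge)
  then show ?thesis using a b by simp
qed

end
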